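(* For $|q|<1$, \begin{align*} \sum_{r=-\infty}^{\infty}\frac{q^{4r^2}}{(-q^2;q^2)_{2r}}&=\frac{(q^2;q^2)_{\infty}}{2}\left[(q;q^2)^3_{\infty}+(-q;q^2)^3_{\infty}\right],\\ \sum_{r=-\infty}^{\infty}\frac{q^{4r^2+4r}}{(-q^2;q^2)_{2r+1}}&=\frac{(q^2;q^2)_{\infty}}{2q}\left[(-q;q^2)^3_{\infty}-(q;q^2)^3_{\infty}\right],\\ \sum_{r=-\infty}^{\infty}(8r+1)q^{8r^2+2r}&=\frac{(q^2;q^2)^3_{\infty}}{2}\left[(q;q^2)^3_{\infty}+(-q;q^2)^3_{\infty}\right],\\ \sum_{r=-\infty}^{\infty}(8r+3)q^{8r^2+6r}&=\frac{(q^2;q^2)^3_{\infty}}{2q}\left[(-q;q^2)^3_{\infty}-(q;q^2)^3_{\infty}\right]. \end{align*}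
   Context: For $n\ge 0$, $(a;q)_n=\prod_{j=0}^{n-1}(1-aq^j)$, $(a;q)_\infty=\prod_{j\ge0}(1-aq^j)$, and for negative index $(a;q)_{-n}=1/(aq^{-n};q)_n$. *)

theory Defs
  imports "HOL-Analysis.Analysis"
begin

definition qpoch :: "complex \<Rightarrow> complex \<Rightarrow> nat \<Rightarrow> complex" where
  "qpoch a q n = (\<Prod>j<n. (1 - a * q ^ j))"

definition qpochZ :: "complex \<Rightarrow> complex \<Rightarrow> int \<Rightarrow> complex" where
  "qpochZ a q k = (if 0 \<le> k then qpoch a q (nat k)
                   else 1 / qpoch (a * q powi k) q (nat (- k)))"

definition qpoch_inf :: "complex \<Rightarrow> complex \<Rightarrow> complex" where
  "qpoch_inf a q = lim (\<lambda>n. qpoch a q n)"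

end

theory Submission
  imports Defs "HOL-Library.Nat_Bijection"
begin

text \<open>
  Euler's two expansions \<open>(z;p)\<^sub>\<infinity> = \<Sum>\<^sub>k (-1)\<^sup>k p\<^sup>k\<^sup>(\<^sup>k\<^sup>-\<^sup>1\<^sup>)\<^sup>/\<^sup>2 z\<^sup>k/(p;p)\<^sub>k\<close> and
  \<open>1/(z;p)\<^sub>\<infinity> = \<Sum>\<^sub>k z\<^sup>k/(p;p)\<^sub>k\<close> give the Jacobi triple product by multiplying the theta
  series with the second expansion and summing along diagonals. The same diagonal summation yields
  \<open>\<Sum>\<^sub>n q\<^sup>n\<^sup>2/(-q\<^sup>2;q\<^sup>2)\<^sub>n = (q\<^sup>2;q\<^sup>2)\<^sub>\<infinity> (-q;q\<^sup>2)\<^sub>\<infinity>\<^sup>3\<close> over \<open>n \<in> \<int>\<close>. Putting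
  \<open>z = -\<surd>q w\<close> in the triple product and letting \<open>w \<rightarrow> 1\<close> gives Jacobi's identity
  \<open>\<Sum>\<^sub>k (4k+1) q\<^sup>2\<^sup>k\<^sup>2\<^sup>+\<^sup>k = (q;q)\<^sub>\<infinity>\<^sup>3\<close>.
  Under \<open>q \<mapsto> -q\<close> both series only change the sign of their odd-indexed terms, so their even
  and odd parts are half the sum and half the difference of the values at \<open>q\<close> and \<open>-q\<close>; with
  \<open>(q;q)\<^sub>\<infinity> = (q;q\<^sup>2)\<^sub>\<infinity> (q\<^sup>2;q\<^sup>2)\<^sub>\<infinity>\<close> these are the four identities.
\<close>

section \<open>Euler's expansions of \<open>(z;p)\<^sub>\<infinity>\<close> and its reciprocal\<close>

lemma qpoch_0 [simp]: "qpoch a p 0 = 1"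
  by (simp add: qpoch_def)

lemma qpoch_Suc: "qpoch a p (Suc n) = qpoch a p n * (1 - a * p ^ n)"
  by (simp add: qpoch_def)

lemma norm_one_minus_pow_ge:
  fixes p :: complex
  assumes "norm p < 1"
  shows "1 - norm p \<le> norm (1 - p * p ^ k)"
proof -
  have "norm (p * p ^ k) \<le> norm p"
    using assms by (simp add: norm_mult norm_power mult_left_le power_le_one)
  moreover have "1 - norm (p * p ^ k) \<le> norm (1 - p * p ^ k)"
    using norm_triangle_ineq2[of 1 "p * p ^ k"] by simp
  ultimately show ?thesis by linarith
qed

lemma one_minus_pow_nonzero:
  fixes p :: complex
  assumes "norm p < 1"
  shows "1 - p * p ^ k \<noteq> 0"
  using norm_one_minus_pow_ge[OF assms, of k] assms by auto

lemma qpoch_nonzero: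
  assumes "norm a < 1" "norm p \<le> 1"
  shows "qpoch a p n \<noteq> 0"
proof -
  have "norm (a * p ^ j) \<le> norm a" for j
    using assms by (simp add: norm_mult norm_power mult_left_le power_le_one)
  hence "norm (a * p ^ j) < 1" for j
    using assms(1) by (rule le_less_trans)
  hence "1 - a * p ^ j \<noteq> 0" for j
    by (metis eq_iff_diff_eq_0 norm_one order.irrefl)
  thus ?thesis by (simp add: qpoch_def)
qed

lemma qpoch_double: "qpoch a p (2 * N) = qpoch a (p^2) N * qpoch (a * p) (p^2) N"
proof (induction N)
  case (Suc N)
  have "qpoch a p (2 * Suc N) = qpoch a p (2 * N) * (1 - a * p ^ (2 * N)) * (1 - a * p ^ Suc (2 * N))"
    by (simp add: qpoch_Suc)
  moreover have "(p^2)^N = p^(2*N)" by (simp add: power_mult)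
  ultimately show ?case unfolding Suc.IH by (simp only: qpoch_Suc power_Suc mult_ac)
qed simp

lemma qpoch_times_qpoch_minus: "qpoch a p N * qpoch (- a) p N = qpoch (a^2) (p^2) N"
proof (induction N)
  case (Suc N)
  have "(1 - a * p ^ N) * (1 + a * p ^ N) = 1 - a^2 * (p^2) ^ N"
    by (simp add: power2_eq_square power_mult_distrib algebra_simps flip: power_mult)
  with Suc show ?case by (simp add: qpoch_Suc mult_ac)
qed simp

lemma norm_power2_less_one:
  fixes q :: complex
  assumes "norm q < 1"
  shows "norm (q^2) < 1"
  using assms by (simp add: norm_power power_less_one_iff)

lemma norm_pow_mult_less_one:
  fixes p z :: complex
  assumes "norm p < 1" "norm z < 1"
  shows "norm (p ^ N * z) < 1"
proof -
  have "norm (p ^ N) * norm z \<le> norm z"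
    using assms by (simp add: norm_power power_le_one mult_left_le_one_le)
  thus ?thesis using assms(2) by (simp add: norm_mult)
qed

definition euler_coeff :: "complex \<Rightarrow> nat \<Rightarrow> complex" where
  "euler_coeff p k = (-1) ^ k * p ^ (k * (k - 1) div 2) / qpoch p p k"

definition euler_series :: "complex \<Rightarrow> complex \<Rightarrow> complex" where
  "euler_series p z = (\<Sum>k. euler_coeff p k * z ^ k)"

lemma euler_coeff_0 [simp]: "euler_coeff p 0 = 1"
  by (simp add: euler_coeff_def)

lemma euler_coeff_Suc: "euler_coeff p (Suc k) = euler_coeff p k * (- (p ^ k) / (1 - p * p ^ k))"
proof -
  have "Suc k * k = k * (k - 1) + 2 * k"
    by (cases k) (simp_all add: algebra_simps)
  hence "Suc k * (Suc k - 1) div 2 = k * (k - 1) div 2 + k"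
    by simp
  hence "p ^ (Suc k * (Suc k - 1) div 2) = p ^ (k * (k - 1) div 2) * p ^ k"
    by (simp only: power_add)
  thus ?thesis unfolding euler_coeff_def qpoch_Suc by (simp add: field_simps)
qed

lemma summable_norm_euler_series:
  assumes "norm p < 1"
  shows "summable (\<lambda>k. norm (euler_coeff p k * z ^ k))"
proof -
  have pos: "1 - norm p > 0" using assms by simp
  have "(\<lambda>k. norm p ^ k * norm z) \<longlonglongrightarrow> 0 * norm z"
    by (intro tendsto_intros) (use assms in \<open>simp add: LIMSEQ_power_zero\<close>)
  hence "\<forall>\<^sub>F k in sequentially. norm p ^ k * norm z < (1 - norm p) / 2"
    using pos by (intro order_tendstoD) auto
  then obtain N where N: "\<And>k. k \<ge> N \<Longrightarrow> norm p ^ k * norm z < (1 - norm p) / 2"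
    by (auto simp: eventually_sequentially)
  show ?thesis
  proof (rule summable_ratio_test[of "1/2" N])
    fix k assume "k \<ge> N"
    have b: "1 - norm p \<le> norm (1 - p * p ^ k)" by (rule norm_one_minus_pow_ge[OF assms])
    hence b': "norm (1 - p * p ^ k) > 0" using pos by linarith
    have ratio: "norm p ^ k * norm z / norm (1 - p * p ^ k) \<le> 1/2"
    proof -
      have "norm p ^ k * norm z / norm (1 - p * p ^ k) \<le> norm p ^ k * norm z / (1 - norm p)"
        using b b' pos by (intro divide_left_mono) auto
      also have "\<dots> \<le> 1/2" using N[OF \<open>k \<ge> N\<close>] pos by (simp add: field_simps)
      finally show ?thesis .
    qed
    have "norm (euler_coeff p (Suc k) * z ^ Suc k)
        = norm (euler_coeff p k * z ^ k) * (norm p ^ k * norm z / norm (1 - p * p ^ k))"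
      using b' by (simp add: euler_coeff_Suc norm_mult norm_divide norm_power field_simps)
    also have "\<dots> \<le> norm (euler_coeff p k * z ^ k) * (1/2)"
      by (rule mult_left_mono[OF ratio]) simp
    finally show "norm (norm (euler_coeff p (Suc k) * z ^ Suc k))
        \<le> 1/2 * norm (norm (euler_coeff p k * z ^ k))"
      by simp
  qed simp
qed

lemma euler_series_sums:
  assumes "norm p < 1"
  shows "(\<lambda>k. euler_coeff p k * z ^ k) sums euler_series p z"
  unfolding euler_series_def
  by (rule summable_sums[OF summable_norm_cancel[OF summable_norm_euler_series[OF assms]]])

lemma euler_series_0 [simp]: "euler_series p 0 = 1"
  unfolding euler_series_def using powser_zero[of "euler_coeff p"] by simp

lemma euler_series_funeq:
  assumes p: "norm p < 1"
  shows "euler_series p z = (1 - z) * euler_series p (p * z)"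
proof -
  let ?u = "\<lambda>k. euler_coeff p k * z ^ k" and ?v = "\<lambda>k. euler_coeff p k * (p * z) ^ k"
  have su: "?u sums euler_series p z" and sv: "?v sums euler_series p (p * z)"
    using euler_series_sums[OF p] by auto
  have shift: "?u (Suc j) - ?v (Suc j) = - z * ?v j" for j
  proof -
    have "?u (Suc j) - ?v (Suc j) = euler_coeff p (Suc j) * (1 - p * p ^ j) * z ^ Suc j"
      by (simp only: power_mult_distrib power_Suc) (simp add: algebra_simps)
    also have "\<dots> = euler_coeff p j * (- (p ^ j)) * z ^ Suc j"
      using one_minus_pow_nonzero[OF p] by (simp add: euler_coeff_Suc)
    finally show ?thesis by (simp add: power_mult_distrib algebra_simps)
  qed
  have "(\<lambda>j. ?u (Suc j) - ?v (Suc j)) sums (- z * euler_series p (p * z))"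
    unfolding shift by (intro sums_mult sv)
  hence "(\<lambda>k. ?u k - ?v k) sums (- z * euler_series p (p * z))"
    by (subst (asm) sums_Suc_iff) simp
  from sums_unique2[OF sums_diff[OF su sv] this]
  show ?thesis by (simp add: algebra_simps)
qed

lemma qpoch_times_euler_series:
  assumes "norm p < 1"
  shows "qpoch z p N * euler_series p (p ^ N * z) = euler_series p z"
proof (induction N)
  case (Suc N)
  have "qpoch z p (Suc N) * euler_series p (p ^ Suc N * z)
      = qpoch z p N * ((1 - p ^ N * z) * euler_series p (p * (p ^ N * z)))"
    by (simp add: qpoch_Suc mult_ac)
  also have "\<dots> = euler_series p z"
    using Suc by (simp only: euler_series_funeq[OF assms, symmetric])
  finally show ?case .
qed simp

lemma isCont_euler_series:
  assumes "norm p < 1"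
  shows "isCont (euler_series p) z"
  unfolding euler_series_def[abs_def]
  by (rule isCont_powser_converges_everywhere)
     (rule summable_norm_cancel[OF summable_norm_euler_series[OF assms]])

text \<open>Since \<open>p\<^sup>N z \<rightarrow> 0\<close>, letting \<open>N \<rightarrow> \<infinity>\<close> in the last identity yields Euler's expansion.\<close>

lemma qpoch_tendsto_euler_series:
  assumes p: "norm p < 1"
  shows "(\<lambda>N. qpoch z p N) \<longlonglongrightarrow> euler_series p z"
proof -
  have "(\<lambda>N. p ^ N * z) \<longlonglongrightarrow> 0"
    using tendsto_mult_left_zero[OF LIMSEQ_power_zero[of p]] p by simp
  from isCont_tendsto_compose[OF isCont_euler_series[OF p] this]
  have tail: "(\<lambda>N. euler_series p (p ^ N * z)) \<longlonglongrightarrow> 1" by simp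
  hence "(\<lambda>N. euler_series p z / euler_series p (p ^ N * z)) \<longlonglongrightarrow> euler_series p z / 1"
    by (intro tendsto_divide tendsto_const) auto
  moreover have "\<forall>\<^sub>F N in sequentially.
      euler_series p z / euler_series p (p ^ N * z) = qpoch z p N"
    using tendsto_imp_eventually_ne[OF tail, of 0]
  proof (rule eventually_mono)
    fix N assume "euler_series p (p ^ N * z) \<noteq> 0"
    thus "euler_series p z / euler_series p (p ^ N * z) = qpoch z p N"
      using qpoch_times_euler_series[OF p, of z N] by (simp add: field_simps)
  qed simp
  ultimately show ?thesis by (simp add: Lim_transform_eventually)
qed

lemma qpoch_inf_eq_euler_series:
  assumes "norm p < 1"
  shows "qpoch_inf z p = euler_series p z"
  unfolding qpoch_inf_def using qpoch_tendsto_euler_series[OF assms] by (rule limI)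

lemma qpoch_tendsto_qpoch_inf:
  assumes "norm p < 1"
  shows "(\<lambda>N. qpoch z p N) \<longlonglongrightarrow> qpoch_inf z p"
  using qpoch_tendsto_euler_series[OF assms] qpoch_inf_eq_euler_series[OF assms] by simp

lemma qpoch_inf_has_sum:
  assumes "norm p < 1"
  shows "((\<lambda>k. euler_coeff p k * z ^ k) has_sum qpoch_inf z p) UNIV"
  unfolding qpoch_inf_eq_euler_series[OF assms]
  by (rule norm_summable_imp_has_sum[OF summable_norm_euler_series[OF assms] euler_series_sums[OF assms]])

lemma qpoch_inf_funeq:
  assumes "norm p < 1"
  shows "qpoch_inf z p = (1 - z) * qpoch_inf (p * z) p"
  unfolding qpoch_inf_eq_euler_series[OF assms] by (rule euler_series_funeq[OF assms])

lemma qpoch_times_qpoch_inf: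
  assumes "norm p < 1"
  shows "qpoch z p N * qpoch_inf (p ^ N * z) p = qpoch_inf z p"
  unfolding qpoch_inf_eq_euler_series[OF assms] by (rule qpoch_times_euler_series[OF assms])

lemma isCont_qpoch_inf:
  assumes "norm p < 1"
  shows "isCont (\<lambda>z. qpoch_inf z p) z"
  unfolding qpoch_inf_eq_euler_series[OF assms] by (rule isCont_euler_series[OF assms])

definition euler_recip_series :: "complex \<Rightarrow> complex \<Rightarrow> complex" where
  "euler_recip_series p z = (\<Sum>k. inverse (qpoch p p k) * z ^ k)"

lemma summable_norm_euler_recip_series:
  assumes p: "norm p < 1" and z: "norm z < 1"
  shows "summable (\<lambda>k. norm (inverse (qpoch p p k) * z ^ k))"
proof -
  define c where "c = (1 + norm z) / 2"
  have c1: "c < 1" and cz: "norm z < c" using z by (auto simp: c_def)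
  have "(\<lambda>k. c * (1 - norm p ^ k)) \<longlonglongrightarrow> c * (1 - 0)"
    by (intro tendsto_intros) (use p in \<open>simp add: LIMSEQ_power_zero\<close>)
  hence "\<forall>\<^sub>F k in sequentially. norm z < c * (1 - norm p ^ k)"
    using cz by (intro order_tendstoD) auto
  then obtain N where N: "\<And>k. k \<ge> N \<Longrightarrow> norm z < c * (1 - norm p ^ k)"
    by (auto simp: eventually_sequentially)
  show ?thesis
  proof (rule summable_ratio_test[of c N])
    fix k assume k: "k \<ge> N"
    have "norm (p * p ^ k) \<le> norm p ^ k"
      using p by (simp add: norm_mult norm_power mult_left_le_one_le)
    moreover have "1 - norm (p * p ^ k) \<le> norm (1 - p * p ^ k)"
      using norm_triangle_ineq2[of 1 "p * p ^ k"] by simp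
    ultimately have "norm z \<le> c * norm (1 - p * p ^ k)"
      using N[OF k] c1 cz by (smt (verit) mult_left_mono norm_ge_zero)
    hence ratio: "norm z / norm (1 - p * p ^ k) \<le> c"
      using one_minus_pow_nonzero[OF p, of k] by (simp add: divide_le_eq)
    have "norm (inverse (qpoch p p (Suc k)) * z ^ Suc k) =
      norm (inverse (qpoch p p k) * z ^ k) * (norm z / norm (1 - p * p ^ k))"
      by (simp add: qpoch_Suc norm_mult norm_power norm_inverse inverse_mult_distrib
          divide_inverse mult_ac)
    also have "\<dots> \<le> norm (inverse (qpoch p p k) * z ^ k) * c"
      by (rule mult_left_mono[OF ratio]) simp
    finally show "norm (norm (inverse (qpoch p p (Suc k)) * z ^ Suc k))
        \<le> c * norm (norm (inverse (qpoch p p k) * z ^ k))"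
      by (simp add: mult.commute)
  qed (rule c1)
qed

lemma euler_recip_series_sums:
  assumes "norm p < 1" "norm z < 1"
  shows "(\<lambda>k. inverse (qpoch p p k) * z ^ k) sums euler_recip_series p z"
  unfolding euler_recip_series_def
  by (rule summable_sums[OF summable_norm_cancel[OF summable_norm_euler_recip_series[OF assms]]])

lemma euler_recip_series_0 [simp]: "euler_recip_series p 0 = 1"
  unfolding euler_recip_series_def using powser_zero[of "\<lambda>k. inverse (qpoch p p k)"] by simp

lemma euler_recip_series_funeq:
  assumes p: "norm p < 1" and z: "norm z < 1"
  shows "(1 - z) * euler_recip_series p z = euler_recip_series p (p * z)"
proof -
  have pz: "norm (p * z) < 1" using norm_pow_mult_less_one[OF p z, of 1] by simp
  let ?u = "\<lambda>k. inverse (qpoch p p k) * z ^ k" and ?v = "\<lambda>k. inverse (qpoch p p k) * (p * z) ^ k"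
  have su: "?u sums euler_recip_series p z" and sv: "?v sums euler_recip_series p (p * z)"
    using euler_recip_series_sums[OF p] z pz by auto
  have shift: "?v (Suc j) - ?u (Suc j) = - z * ?u j" for j
  proof -
    have "?v (Suc j) - ?u (Suc j)
        = inverse (qpoch p p j) * inverse (1 - p * p ^ j) * (p * p ^ j - 1) * z ^ Suc j"
      by (simp only: power_mult_distrib power_Suc qpoch_Suc inverse_mult_distrib)
         (simp add: algebra_simps)
    also have "\<dots> = - z * ?u j"
      using one_minus_pow_nonzero[OF p, of j] qpoch_nonzero[of p p j] p
      by (simp add: field_simps)
    finally show ?thesis .
  qed
  have "(\<lambda>j. ?v (Suc j) - ?u (Suc j)) sums (- z * euler_recip_series p z)"
    unfolding shift by (intro sums_mult su)
  hence "(\<lambda>k. ?v k - ?u k) sums (- z * euler_recip_series p z)"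
    by (subst (asm) sums_Suc_iff) simp
  from sums_unique2[OF sums_diff[OF sv su] this]
  show ?thesis by (simp add: algebra_simps)
qed

lemma qpoch_times_euler_recip_series:
  assumes p: "norm p < 1" and z: "norm z < 1"
  shows "qpoch z p N * euler_recip_series p z = euler_recip_series p (p ^ N * z)"
proof (induction N)
  case (Suc N)
  have "qpoch z p (Suc N) * euler_recip_series p z
      = (1 - p ^ N * z) * euler_recip_series p (p ^ N * z)"
    using Suc by (simp add: qpoch_Suc mult_ac)
  also have "\<dots> = euler_recip_series p (p * (p ^ N * z))"
    by (rule euler_recip_series_funeq[OF p norm_pow_mult_less_one[OF p z]])
  finally show ?case by (simp add: mult.assoc)
qed simp

lemma isCont_euler_recip_series_0:
  assumes "norm p < 1"
  shows "isCont (euler_recip_series p) 0"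
proof -
  have "summable (\<lambda>k. inverse (qpoch p p k) * (1/2) ^ k)"
    by (rule summable_norm_cancel[OF summable_norm_euler_recip_series[OF assms]]) simp
  thus ?thesis unfolding euler_recip_series_def[abs_def] by (rule isCont_powser) simp
qed

lemma qpoch_inf_times_euler_recip_series:
  assumes p: "norm p < 1" and z: "norm z < 1"
  shows "qpoch_inf z p * euler_recip_series p z = 1"
proof -
  have "(\<lambda>N. p ^ N * z) \<longlonglongrightarrow> 0"
    using tendsto_mult_left_zero[OF LIMSEQ_power_zero[of p]] p by simp
  from isCont_tendsto_compose[OF isCont_euler_recip_series_0[OF p] this]
  have "(\<lambda>N. qpoch z p N * euler_recip_series p z) \<longlonglongrightarrow> 1"
    by (simp add: qpoch_times_euler_recip_series[OF p z])
  moreover have "(\<lambda>N. qpoch z p N * euler_recip_series p z)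
      \<longlonglongrightarrow> qpoch_inf z p * euler_recip_series p z"
    by (intro tendsto_intros qpoch_tendsto_qpoch_inf[OF p])
  ultimately show ?thesis using LIMSEQ_unique by blast
qed

lemma qpoch_inf_nonzero:
  assumes "norm p < 1" "norm z < 1"
  shows "qpoch_inf z p \<noteq> 0"
  using qpoch_inf_times_euler_recip_series[OF assms] by auto

lemma inverse_qpoch_inf_has_sum:
  assumes "norm p < 1" "norm z < 1"
  shows "((\<lambda>k. inverse (qpoch p p k) * z ^ k) has_sum inverse (qpoch_inf z p)) UNIV"
proof -
  have "euler_recip_series p z = inverse (qpoch_inf z p)"
    using inverse_unique[OF qpoch_inf_times_euler_recip_series[OF assms]] by simp
  thus ?thesis
    using norm_summable_imp_has_sum[OF summable_norm_euler_recip_series[OF assms]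
        euler_recip_series_sums[OF assms]] by simp
qed

lemma qpoch_inf_double:
  assumes p: "norm p < 1"
  shows "qpoch_inf a p = qpoch_inf a (p^2) * qpoch_inf (a * p) (p^2)"
proof -
  have p2: "norm (p^2) < 1" by (rule norm_power2_less_one[OF p])
  have "(\<lambda>N. qpoch a p (2 * N)) \<longlonglongrightarrow> qpoch_inf a p"
    using LIMSEQ_subseq_LIMSEQ[OF qpoch_tendsto_qpoch_inf[OF p], of "\<lambda>N. 2 * N"]
    by (simp add: strict_mono_def o_def)
  moreover have "(\<lambda>N. qpoch a p (2 * N)) \<longlonglongrightarrow> qpoch_inf a (p^2) * qpoch_inf (a * p) (p^2)"
    unfolding qpoch_double by (intro tendsto_intros qpoch_tendsto_qpoch_inf[OF p2])
  ultimately show ?thesis by (rule LIMSEQ_unique)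
qed

lemma qpoch_inf_times_qpoch_inf_minus:
  assumes p: "norm p < 1"
  shows "qpoch_inf a p * qpoch_inf (- a) p = qpoch_inf (a^2) (p^2)"
proof -
  have "(\<lambda>N. qpoch a p N * qpoch (- a) p N) \<longlonglongrightarrow> qpoch_inf a p * qpoch_inf (- a) p"
    by (intro tendsto_intros qpoch_tendsto_qpoch_inf[OF p])
  moreover have "(\<lambda>N. qpoch a p N * qpoch (- a) p N) \<longlonglongrightarrow> qpoch_inf (a^2) (p^2)"
    unfolding qpoch_times_qpoch_minus by (rule qpoch_tendsto_qpoch_inf[OF norm_power2_less_one[OF p]])
  ultimately show ?thesis by (rule LIMSEQ_unique)
qed

text \<open>Euler: partitions into odd parts are equinumerous with partitions into distinct parts.\<close>

lemma qpoch_inf_odd_times_distinct: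
  fixes x :: complex
  assumes x: "norm x < 1"
  shows "qpoch_inf x (x^2) * qpoch_inf (- x) x = 1"
proof -
  have x2: "norm (x^2) < 1" by (rule norm_power2_less_one[OF x])
  have "qpoch_inf (x^2) (x^2) * (qpoch_inf x (x^2) * qpoch_inf (- x) x)
      = qpoch_inf x x * qpoch_inf (- x) x"
    using qpoch_inf_double[OF x, of x] by (simp add: power2_eq_square mult_ac)
  also have "\<dots> = qpoch_inf (x^2) (x^2) * 1"
    using qpoch_inf_times_qpoch_inf_minus[OF x] by simp
  finally show ?thesis using qpoch_inf_nonzero[OF x2 x2] by simp
qed

lemma qpoch_inf_product_eq_one:
  fixes q :: complex
  assumes q: "norm q < 1"
  shows "qpoch_inf q (q^2) * qpoch_inf (- q) (q^2) * qpoch_inf (- (q^2)) (q^2) = 1"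
  using qpoch_inf_times_qpoch_inf_minus[OF norm_power2_less_one[OF q], of q]
    qpoch_inf_odd_times_distinct[OF norm_power2_less_one[OF q]]
  by simp

lemma inverse_qpochZ:
  fixes p a :: complex
  assumes p: "norm p < 1" "p \<noteq> 0" and a: "qpoch_inf a p \<noteq> 0"
  shows "1 / qpochZ a p n = qpoch_inf (a * p powi n) p / qpoch_inf a p"
proof (cases "n \<ge> 0")
  case True
  then obtain m where n: "n = int m" by (metis nonneg_int_cases)
  have h: "qpoch a p m * qpoch_inf (p ^ m * a) p = qpoch_inf a p"
    by (rule qpoch_times_qpoch_inf[OF p(1)])
  hence "qpoch_inf (p ^ m * a) p \<noteq> 0" using a by auto
  hence "1 / qpoch a p m = qpoch_inf (p ^ m * a) p / qpoch_inf a p"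
    by (simp flip: h)
  thus ?thesis by (simp add: qpochZ_def n mult.commute)
next
  case False
  define m where "m = nat (- n)"
  have n: "n = - int m" using False unfolding m_def by simp
  have "qpoch (a * p powi n) p m * qpoch_inf (p ^ m * (a * p powi n)) p = qpoch_inf (a * p powi n) p"
    by (rule qpoch_times_qpoch_inf[OF p(1)])
  moreover have "p ^ m * (a * p powi n) = a" using p(2) unfolding n by (simp add: power_int_minus)
  ultimately have "qpoch (a * p powi n) p m = qpoch_inf (a * p powi n) p / qpoch_inf a p"
    using a by (simp add: eq_divide_eq)
  thus ?thesis unfolding qpochZ_def using False n by simp
qed

section \<open>The Jacobi triple product\<close>

lemma range_int_Un_negatives: "range int \<union> range (\<lambda>n::nat. - int n - 1) = UNIV"
proof -
  have "x \<in> range int \<union> range (\<lambda>n::nat. - int n - 1)" for x :: int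
  proof (cases "x \<ge> 0")
    case True thus ?thesis by (metis UnI1 nonneg_int_cases rangeI)
  next
    case False
    hence "x = - int (nat (- x - 1)) - 1" by simp
    thus ?thesis by (metis UnI2 rangeI)
  qed
  thus ?thesis by blast
qed

lemma has_sum_int_split:
  fixes f :: "int \<Rightarrow> 'a::topological_comm_monoid_add"
  assumes "((\<lambda>n. f (int n)) has_sum A) UNIV" "((\<lambda>n. f (- int n - 1)) has_sum B) UNIV"
  shows "(f has_sum (A + B)) UNIV"
proof -
  have "(f has_sum A) (range int)"
    using assms(1) has_sum_reindex[of int UNIV f A] by (simp add: o_def)
  moreover have "(f has_sum B) (range (\<lambda>n::nat. - int n - 1))"
    using assms(2) has_sum_reindex[of "\<lambda>n::nat. - int n - 1" UNIV f B]
    by (simp add: o_def inj_on_def)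
  moreover have "range int \<inter> range (\<lambda>n::nat. - int n - 1) = {}" by auto
  ultimately show ?thesis using has_sum_Un_disjoint range_int_Un_negatives by metis
qed

lemma summable_on_int_split:
  fixes f :: "int \<Rightarrow> real"
  assumes "summable (\<lambda>n. norm (f (int n)))" "summable (\<lambda>n. norm (f (- int n - 1)))"
  shows "f summable_on UNIV"
  using has_sum_int_split[OF norm_summable_imp_has_sum[OF assms(1)] norm_summable_imp_has_sum[OF assms(2)]]
    summable_sums[OF summable_norm_cancel[OF assms(1)]]
    summable_sums[OF summable_norm_cancel[OF assms(2)]]
  by (auto simp: summable_on_def)

lemma sums_int_pairs:
  fixes f :: "int \<Rightarrow> 'a::banach"
  assumes f: "(f has_sum S) UNIV"
  shows "(\<lambda>n. f (int n) + f (- int n - 1)) sums S"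
proof -
  have summ: "f summable_on A" for A
    using summable_on_subset_banach[OF has_sum_imp_summable[OF f]] by blast
  define A where "A = infsum f (range int)"
  define B where "B = infsum f (range (\<lambda>n::nat. - int n - 1))"
  have "(f has_sum A) (range int)" and "(f has_sum B) (range (\<lambda>n::nat. - int n - 1))"
    unfolding A_def B_def using summ by (auto intro: has_sum_infsum)
  hence "((\<lambda>n. f (int n)) has_sum A) UNIV" and "((\<lambda>n. f (- int n - 1)) has_sum B) UNIV"
    by (simp_all add: has_sum_reindex inj_on_def o_def)
  moreover from this have "S = A + B"
    using has_sum_unique[OF f has_sum_int_split] by blast
  ultimately show ?thesis using sums_add has_sum_imp_sums by blast
qed

lemma summable_power_times_power_square:
  fixes r R :: real
  assumes "0 \<le> r" "r < 1" "0 \<le> R"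
  shows "summable (\<lambda>n. R ^ n * r ^ (n * n))"
proof -
  have "(\<lambda>n. R * r * r ^ n * r ^ n) \<longlonglongrightarrow> R * r * 0 * 0"
    by (intro tendsto_intros) (use assms in \<open>simp_all add: LIMSEQ_power_zero\<close>)
  hence "\<forall>\<^sub>F n in sequentially. R * r * r ^ n * r ^ n < 1/2"
    by (intro order_tendstoD) auto
  then obtain N where N: "\<And>n. n \<ge> N \<Longrightarrow> R * r * r ^ n * r ^ n < 1/2"
    by (auto simp: eventually_sequentially)
  show ?thesis
  proof (rule summable_ratio_test[of "1/2" N])
    fix n assume "n \<ge> N"
    have nn: "0 \<le> R ^ n * r ^ (n * n)" using assms by simp
    have "norm (R ^ Suc n * r ^ (Suc n * Suc n)) = R ^ n * r ^ (n * n) * (R * r * r ^ n * r ^ n)"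
      using assms by (simp add: power_add algebra_simps)
    also have "\<dots> \<le> R ^ n * r ^ (n * n) * (1/2)"
      using N[OF \<open>n \<ge> N\<close>] nn by (intro mult_left_mono) auto
    finally show "norm (R ^ Suc n * r ^ (Suc n * Suc n)) \<le> 1/2 * norm (R ^ n * r ^ (n * n))"
      using nn by simp
  qed simp
qed

lemma powi_minus_of_nat_minus_one: "x powi (- int n - 1) = inverse x ^ Suc n"
  for x :: "'a::field"
proof -
  have "- int n - 1 = - int (Suc n)" by simp
  thus ?thesis by (simp only: power_int_minus power_int_of_nat power_inverse)
qed

lemma summable_on_norm_theta_terms:
  fixes q z :: complex
  assumes q: "norm q < 1"
  shows "(\<lambda>n::int. norm (z powi n * q powi (n^2))) summable_on UNIV"
proof (rule summable_on_int_split)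
  have "summable (\<lambda>n. norm z ^ n * norm q ^ (n * n))"
    by (rule summable_power_times_power_square) (use q in auto)
  thus "summable (\<lambda>n. norm (norm (z powi int n * q powi (int n)\<^sup>2)))"
    by (simp add: norm_mult norm_power power2_eq_square flip: of_nat_mult)
next
  have "summable (\<lambda>n. inverse (norm z) ^ n * norm q ^ (n * n))"
    by (rule summable_power_times_power_square) (use q in auto)
  hence "summable (\<lambda>n. inverse (norm z) ^ Suc n * norm q ^ (Suc n * Suc n))"
    by (subst summable_Suc_iff)
  moreover have "(- int n - 1)^2 = int (Suc n * Suc n)" for n
    by (simp add: power2_eq_square algebra_simps)
  ultimately show "summable (\<lambda>n. norm (norm (z powi (- int n - 1) * q powi (- int n - 1)\<^sup>2)))"
    by (simp only: powi_minus_of_nat_minus_one power_int_of_nat)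
       (simp add: norm_mult norm_power norm_inverse)
qed

lemma has_sum_product_Sigma:
  fixes a :: "'i \<Rightarrow> complex" and b :: "'j \<Rightarrow> complex"
  assumes na: "(\<lambda>m. norm (a m)) summable_on UNIV" and nb: "(\<lambda>k. norm (b k)) summable_on UNIV"
    and ha: "(a has_sum A) UNIV" and hb: "(b has_sum B) UNIV"
  shows "((\<lambda>(m, k). a m * b k) has_sum (A * B)) (UNIV \<times> UNIV)"
proof (rule has_sum_SigmaI[where g = "\<lambda>m. a m * B"])
  show "((\<lambda>k. case (m, k) of (m, k) \<Rightarrow> a m * b k) has_sum a m * B) UNIV" for m
    using has_sum_cmult_right[OF hb, of "a m"] by simp
  show "((\<lambda>m. a m * B) has_sum A * B) UNIV" by (rule has_sum_cmult_left[OF ha])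
  have "(\<lambda>x. norm (case x of (m, k) \<Rightarrow> a m * b k)) summable_on UNIV \<times> UNIV"
  proof (rule Infinite_Sum.abs_summable_on_Sigma_iff[THEN iffD2], intro conjI ballI)
    show "(\<lambda>k. norm (case (m, k) of (m, k) \<Rightarrow> a m * b k)) summable_on UNIV" for m
      using summable_on_cmult_right[OF nb, of "norm (a m)"] by (simp add: norm_mult)
    have "infsum (\<lambda>k. norm (b k)) UNIV \<ge> 0" by (rule infsum_nonneg) simp
    hence "(\<lambda>m. norm (infsum (\<lambda>k. norm (case (m, k) of (m, k) \<Rightarrow> a m * b k)) UNIV))
        = (\<lambda>m. norm (a m) * infsum (\<lambda>k. norm (b k)) UNIV)"
      by (simp add: norm_mult infsum_cmult_right' abs_mult)
    thus "(\<lambda>m. norm (infsum (\<lambda>k. norm (case (m, k) of (m, k) \<Rightarrow> a m * b k)) UNIV))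
        summable_on UNIV"
      using summable_on_cmult_left[OF na, of "infsum (\<lambda>k. norm (b k)) UNIV"] by simp
  qed
  thus "(\<lambda>(m, k). a m * b k) summable_on UNIV \<times> UNIV"
    by (rule abs_summable_summable)
qed

lemma has_sum_shifted_product:
  fixes a :: "int \<Rightarrow> complex" and b :: "nat \<Rightarrow> complex"
  assumes na: "(\<lambda>m. norm (a m)) summable_on UNIV" and nb: "(\<lambda>k. norm (b k)) summable_on UNIV"
    and ha: "(a has_sum A) UNIV" and hb: "(b has_sum B) UNIV"
    and hs: "\<And>n. ((\<lambda>k. a (n + int k) * b k) has_sum s n) UNIV"
  shows "(s has_sum (A * B)) UNIV"
proof -
  have "((\<lambda>(n, k). a (n + int k) * b k) has_sum (A * B)) (UNIV \<times> UNIV)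
      \<longleftrightarrow> ((\<lambda>(m, k). a m * b k) has_sum (A * B)) (UNIV \<times> UNIV)"
    by (rule has_sum_reindex_bij_witness[where j = "\<lambda>(n, k). (n + int k, k)"
          and i = "\<lambda>(m, k). (m - int k, k)"]) auto
  with has_sum_product_Sigma[OF na nb ha hb]
  have "((\<lambda>(n, k). a (n + int k) * b k) has_sum (A * B)) (UNIV \<times> UNIV)" by simp
  thus ?thesis by (rule has_sum_SigmaD) (simp add: hs)
qed

lemma euler_coeff_square:
  "euler_coeff (q^2) k = (-1) ^ k * q ^ (k * (k - 1)) * inverse (qpoch (q^2) (q^2) k)"
proof -
  have "k * (k - 1) = 2 * (k * (k - 1) div 2)" by (cases k) simp_all
  hence "(q^2) ^ (k * (k - 1) div 2) = q ^ (k * (k - 1))" by (metis power_mult)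
  thus ?thesis by (simp add: euler_coeff_def divide_inverse)
qed

lemma powi_square_shift:
  fixes q :: complex and n :: int and k :: nat
  assumes q: "q \<noteq> 0"
  shows "q powi ((n + int k)^2) * q ^ k = q powi (n^2) * q ^ (k * (k - 1)) * ((q^2) powi (n + 1)) ^ k"
proof -
  have "int (k * (k - 1)) = int k * (int k - 1)" by (cases k) (simp_all add: algebra_simps)
  hence k: "q ^ (k * (k - 1)) = q powi (int k * (int k - 1))"
    by (simp only: power_int_of_nat flip: power_int_of_nat)
  have "((q^2) powi (n + 1)) ^ k = (q powi (2 * (n + 1))) powi int k"
    using power_int_power[of q 2 "n + 1"] by simp
  hence n: "((q^2) powi (n + 1)) ^ k = q powi (2 * (n + 1) * int k)"
    by (simp only: power_int_mult)
  have "q powi ((n + int k)^2) * q ^ k = q powi ((n + int k)^2 + int k)"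
    using q by (simp add: power_int_add flip: power_int_of_nat)
  also have "(n + int k)^2 + int k = n^2 + int k * (int k - 1) + 2 * (n + 1) * int k"
    by (simp add: power2_eq_square algebra_simps)
  also have "q powi \<dots> = q powi (n^2) * q powi (int k * (int k - 1)) * q powi (2 * (n + 1) * int k)"
    using q by (simp add: power_int_add)
  finally show ?thesis by (simp only: k n)
qed

lemma qpoch_inf_at_inverse_power:
  assumes "norm p < 1" "p \<noteq> 0"
  shows "qpoch_inf (p powi (- int m)) p = 0"
proof -
  have "qpoch (p powi (- int m)) p (Suc m) = 0"
    using assms by (simp add: qpoch_Suc power_int_minus)
  thus ?thesis using qpoch_times_qpoch_inf[OF assms(1), of "p powi (- int m)" "Suc m"] by simp
qed

lemma jacobi_shifted_term:
  fixes q z :: complex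
  assumes q: "q \<noteq> 0" and z: "z \<noteq> 0"
  shows "z powi (n + int k) * q powi ((n + int k)^2) * (inverse (qpoch (q^2) (q^2) k) * (- q / z) ^ k)
       = z powi n * q powi (n^2) * (euler_coeff (q^2) k * ((q^2) powi (n + 1)) ^ k)"
proof -
  have zk: "z powi (n + int k) * inverse z ^ k = z powi n"
    using z by (simp add: power_int_add power_inverse)
  have "- q / z = (-1) * q * inverse z" by (simp add: divide_inverse)
  hence "(- q / z) ^ k = (-1) ^ k * q ^ k * inverse z ^ k"
    by (simp only: power_mult_distrib)
  hence "z powi (n + int k) * q powi ((n + int k)^2) * (inverse (qpoch (q^2) (q^2) k) * (- q / z) ^ k)
      = (z powi (n + int k) * inverse z ^ k) * (q powi ((n + int k)^2) * q ^ k)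
        * (-1) ^ k * inverse (qpoch (q^2) (q^2) k)"
    by (simp only: mult_ac)
  also have "\<dots> = z powi n * q powi (n^2) * (euler_coeff (q^2) k * ((q^2) powi (n + 1)) ^ k)"
    unfolding zk powi_square_shift[OF q] euler_coeff_square by (simp only: mult_ac)
  finally show ?thesis .
qed

lemma jacobi_nonneg_term:
  fixes q z :: complex
  assumes q: "norm q < 1" "q \<noteq> 0"
  shows "z powi int m * q powi ((int m)^2) * qpoch_inf ((q^2) powi (int m + 1)) (q^2)
       = qpoch_inf (q^2) (q^2) * (euler_coeff (q^2) m * (- z * q) ^ m)"
proof -
  define p where "p = q^2"
  have p: "norm p < 1" unfolding p_def by (rule norm_power2_less_one[OF q(1)])
  have qn: "qpoch p p m \<noteq> 0" using p by (intro qpoch_nonzero) auto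
  have "qpoch p p m * qpoch_inf (p ^ m * p) p = qpoch_inf p p"
    by (rule qpoch_times_qpoch_inf[OF p])
  hence tail: "qpoch_inf (p powi (int m + 1)) p = qpoch_inf p p / qpoch p p m"
    using qn q(2) by (simp add: field_simps power_int_add p_def mult.commute)
  have "- z * q = (-1) * z * q" by simp
  hence "(- z * q) ^ m = (-1) ^ m * z ^ m * q ^ m" by (simp only: power_mult_distrib)
  hence "euler_coeff p m * (- z * q) ^ m
      = ((-1) ^ m * (-1) ^ m) * z ^ m * (q ^ (m * (m - 1)) * q ^ m) / qpoch p p m"
    unfolding p_def euler_coeff_square divide_inverse by (simp only: mult_ac)
  also have "(-1::complex) ^ m * (-1) ^ m = 1" by (simp flip: power_add)
  also have "q ^ (m * (m - 1)) * q ^ m = q ^ (m * m)"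
    by (cases m) (simp_all add: power_add[symmetric] algebra_simps)
  also have "q ^ (m * m) = q powi ((int m)^2)"
    by (simp add: power2_eq_square flip: power_int_of_nat)
  finally have "euler_coeff p m * (- z * q) ^ m = z powi int m * q powi ((int m)^2) / qpoch p p m"
    by simp
  hence "z powi int m * q powi ((int m)^2) * qpoch_inf (p powi (int m + 1)) p
       = qpoch_inf p p * (euler_coeff p m * (- z * q) ^ m)"
    unfolding tail by simp
  thus ?thesis unfolding p_def .
qed

lemma jacobi_diagonal_sums_has_sum:
  fixes q z :: complex
  assumes q: "norm q < 1" "q \<noteq> 0"
  shows "((\<lambda>n::int. z powi n * q powi (n^2) * qpoch_inf ((q^2) powi (n + 1)) (q^2)) has_sum
          qpoch_inf (q^2) (q^2) * qpoch_inf (- z * q) (q^2)) UNIV"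
proof -
  have p: "norm (q^2) < 1" and p0: "q^2 \<noteq> 0"
    using q by (simp_all add: norm_power2_less_one)
  have "((\<lambda>n::int. z powi n * q powi (n^2) * qpoch_inf ((q^2) powi (n + 1)) (q^2)) has_sum
          qpoch_inf (q^2) (q^2) * qpoch_inf (- z * q) (q^2) + 0) UNIV"
  proof (rule has_sum_int_split)
    show "((\<lambda>m. z powi int m * q powi ((int m)^2) * qpoch_inf ((q^2) powi (int m + 1)) (q^2))
        has_sum qpoch_inf (q^2) (q^2) * qpoch_inf (- z * q) (q^2)) UNIV"
      unfolding jacobi_nonneg_term[OF q] by (rule has_sum_cmult_right[OF qpoch_inf_has_sum[OF p]])
    have "- int m - 1 + 1 = - int m" for m by simp
    thus "((\<lambda>m. z powi (- int m - 1) * q powi ((- int m - 1)^2)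
        * qpoch_inf ((q^2) powi (- int m - 1 + 1)) (q^2)) has_sum 0) UNIV"
      by (intro has_sum_0) (simp add: qpoch_inf_at_inverse_power[OF p p0])
  qed
  thus ?thesis by simp
qed

text \<open>Multiplying the theta series by \<open>1/(-q/z;q\<^sup>2)\<^sub>\<infinity> = \<Sum>\<^sub>k (-q/z)\<^sup>k/(q\<^sup>2;q\<^sup>2)\<^sub>k\<close> and summing
  each diagonal by Euler's expansion leaves \<open>z\<^sup>n q\<^sup>n\<^sup>2 (q\<^sup>2\<^sup>n\<^sup>+\<^sup>2;q\<^sup>2)\<^sub>\<infinity>\<close>, which vanishes for
  \<open>n < 0\<close>; the remaining sum over \<open>n \<ge> 0\<close> is again Euler's expansion of \<open>(-zq;q\<^sup>2)\<^sub>\<infinity>\<close>.\<close>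

lemma jacobi_triple_product_aux:
  fixes q z :: complex
  assumes q0: "q \<noteq> 0" and q: "norm q < 1" and z0: "z \<noteq> 0" and qz: "norm (q / z) < 1"
  shows "((\<lambda>n::int. z powi n * q powi (n^2)) has_sum
          qpoch_inf (q^2) (q^2) * qpoch_inf (- z * q) (q^2) * qpoch_inf (- q / z) (q^2)) UNIV"
proof -
  define p where "p = q^2"
  have p: "norm p < 1" unfolding p_def by (rule norm_power2_less_one[OF q])
  have qz': "norm (- q / z) < 1" using qz by simp
  define a where "a = (\<lambda>n::int. z powi n * q powi (n^2))"
  define b where "b = (\<lambda>k. inverse (qpoch p p k) * (- q / z) ^ k)"
  have a_summable: "(\<lambda>n. norm (a n)) summable_on UNIV"
    unfolding a_def by (rule summable_on_norm_theta_terms[OF q])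
  define T where "T = infsum a UNIV"
  have hT: "(a has_sum T) UNIV"
    unfolding T_def by (rule has_sum_infsum, rule abs_summable_summable, rule a_summable)
  have "((\<lambda>n. z powi n * q powi (n^2) * qpoch_inf (p powi (n + 1)) p) has_sum
      (T * inverse (qpoch_inf (- q / z) p))) UNIV"
  proof (rule has_sum_shifted_product[OF a_summable _ hT])
    show "(\<lambda>k. norm (b k)) summable_on UNIV"
      unfolding b_def
      by (rule norm_summable_imp_summable_on) (use summable_norm_euler_recip_series[OF p qz'] in simp)
    show "(b has_sum inverse (qpoch_inf (- q / z) p)) UNIV"
      unfolding b_def by (rule inverse_qpoch_inf_has_sum[OF p qz'])
    fix n
    have "((\<lambda>k. z powi n * q powi (n^2) * (euler_coeff p k * (p powi (n + 1)) ^ k)) has_sum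
        z powi n * q powi (n^2) * qpoch_inf (p powi (n + 1)) p) UNIV"
      by (rule has_sum_cmult_right[OF qpoch_inf_has_sum[OF p]])
    thus "((\<lambda>k. a (n + int k) * b k) has_sum z powi n * q powi (n^2) * qpoch_inf (p powi (n + 1)) p) UNIV"
      unfolding a_def b_def p_def using jacobi_shifted_term[OF q0 z0, of n] by (simp add: mult.assoc)
  qed
  from has_sum_unique[OF this jacobi_diagonal_sums_has_sum[OF q q0, folded p_def]]
  have "T * inverse (qpoch_inf (- q / z) p) = qpoch_inf p p * qpoch_inf (- z * q) p" .
  hence "T = qpoch_inf p p * qpoch_inf (- z * q) p * qpoch_inf (- q / z) p"
    using qpoch_inf_nonzero[OF p qz'] by (simp add: field_simps)
  with hT show ?thesis unfolding a_def p_def by simp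
qed

theorem jacobi_triple_product:
  fixes q z :: complex
  assumes q0: "q \<noteq> 0" and q: "norm q < 1" and z0: "z \<noteq> 0"
  shows "((\<lambda>n::int. z powi n * q powi (n^2)) has_sum
          qpoch_inf (q^2) (q^2) * qpoch_inf (- z * q) (q^2) * qpoch_inf (- q / z) (q^2)) UNIV"
proof (cases "norm (q / z) < 1")
  case True
  thus ?thesis by (rule jacobi_triple_product_aux[OF q0 q z0])
next
  case False
  hence "norm z \<le> norm q" using z0 by (simp add: norm_divide divide_le_eq)
  hence "norm z * norm q < 1"
    using q by (smt (verit) mult_le_one mult_strict_right_mono norm_ge_zero zero_less_norm_iff z0)
  hence "norm (q / inverse z) < 1" by (simp add: divide_inverse norm_mult mult.commute)
  from jacobi_triple_product_aux[OF q0 q _ this] z0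
  have "((\<lambda>n::int. inverse z powi n * q powi (n^2)) has_sum
          qpoch_inf (q^2) (q^2) * qpoch_inf (- q / z) (q^2) * qpoch_inf (- z * q) (q^2)) UNIV"
    by (simp add: divide_inverse mult_ac)
  also have "((\<lambda>n::int. inverse z powi n * q powi (n^2)) has_sum
      qpoch_inf (q^2) (q^2) * qpoch_inf (- q / z) (q^2) * qpoch_inf (- z * q) (q^2)) UNIV
    \<longleftrightarrow> ((\<lambda>n::int. z powi n * q powi (n^2)) has_sum
      qpoch_inf (q^2) (q^2) * qpoch_inf (- q / z) (q^2) * qpoch_inf (- z * q) (q^2)) UNIV"
    by (rule has_sum_reindex_bij_witness[where i = uminus and j = uminus])
       (auto simp: power_int_minus power_int_inverse)
  finally show ?thesis by (simp add: mult_ac)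
qed

section \<open>A bilateral series over \<open>(-q\<^sup>2;q\<^sup>2)\<^sub>n\<close>\<close>

lemma square_shifted_term:
  fixes q :: complex
  assumes q: "q \<noteq> 0"
  shows "q powi ((n + int k)^2) * (inverse (qpoch (q^2) (q^2) k) * q ^ k)
       = q powi (n^2) * (euler_coeff (q^2) k * (- ((q^2) powi (n + 1))) ^ k)"
proof -
  have sign: "(-1::complex) ^ k * (-1) ^ k = 1" by (simp flip: power_add)
  have "q powi (n^2) * (euler_coeff (q^2) k * (- ((q^2) powi (n + 1))) ^ k)
      = ((-1) ^ k * (-1) ^ k) * (q powi (n^2) * q ^ (k * (k - 1)) * ((q^2) powi (n + 1)) ^ k)
        * inverse (qpoch (q^2) (q^2) k)"
    unfolding euler_coeff_square power_minus[of "(q^2) powi (n + 1)"] by (simp only: mult_ac)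
  also have "\<dots> = (q powi ((n + int k)^2) * q ^ k) * inverse (qpoch (q^2) (q^2) k)"
    unfolding sign powi_square_shift[OF q] by simp
  finally show ?thesis by (simp add: mult_ac)
qed

text \<open>The mechanism of the triple product, now with \<open>1/(q;q\<^sup>2)\<^sub>\<infinity> = \<Sum>\<^sub>k q\<^sup>k/(q\<^sup>2;q\<^sup>2)\<^sub>k\<close>:
  the diagonal sums are \<open>q\<^sup>n\<^sup>2 (-q\<^sup>2\<^sup>n\<^sup>+\<^sup>2;q\<^sup>2)\<^sub>\<infinity> = (-q\<^sup>2;q\<^sup>2)\<^sub>\<infinity> q\<^sup>n\<^sup>2/(-q\<^sup>2;q\<^sup>2)\<^sub>n\<close>, and the
  constant is simplified by \<open>(q;q\<^sup>2)\<^sub>\<infinity> (-q;q\<^sup>2)\<^sub>\<infinity> (-q\<^sup>2;q\<^sup>2)\<^sub>\<infinity> = 1\<close>.\<close>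

lemma square_diagonal_sums_has_sum:
  fixes q :: complex
  assumes q0: "q \<noteq> 0" and q: "norm q < 1"
  shows "((\<lambda>n::int. q powi (n^2) * qpoch_inf (- ((q^2) powi (n + 1))) (q^2)) has_sum
          qpoch_inf (q^2) (q^2) * qpoch_inf (- q) (q^2) * qpoch_inf (- q) (q^2)
            * inverse (qpoch_inf q (q^2))) UNIV"
proof -
  define p where "p = q^2"
  have p: "norm p < 1" unfolding p_def by (rule norm_power2_less_one[OF q])
  have "((\<lambda>n. q powi (n^2) * qpoch_inf (- (p powi (n + 1))) p) has_sum
      qpoch_inf p p * qpoch_inf (- q) p * qpoch_inf (- q) p * inverse (qpoch_inf q p)) UNIV"
  proof (rule has_sum_shifted_product[where a = "\<lambda>n. q powi (n^2)"
        and b = "\<lambda>k. inverse (qpoch p p k) * q ^ k"])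
    show "(\<lambda>n. norm (q powi (n^2))) summable_on UNIV"
      using summable_on_norm_theta_terms[OF q, of 1] by simp
    show "(\<lambda>k. norm (inverse (qpoch p p k) * q ^ k)) summable_on UNIV"
      by (rule norm_summable_imp_summable_on) (use summable_norm_euler_recip_series[OF p q] in simp)
    show "((\<lambda>n. q powi (n^2)) has_sum qpoch_inf p p * qpoch_inf (- q) p * qpoch_inf (- q) p) UNIV"
      using jacobi_triple_product[OF q0 q, of 1] unfolding p_def by simp
    show "((\<lambda>k. inverse (qpoch p p k) * q ^ k) has_sum inverse (qpoch_inf q p)) UNIV"
      by (rule inverse_qpoch_inf_has_sum[OF p q])
    fix n
    have "((\<lambda>k. q powi (n^2) * (euler_coeff p k * (- (p powi (n + 1))) ^ k)) has_sum
        q powi (n^2) * qpoch_inf (- (p powi (n + 1))) p) UNIV"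
      by (rule has_sum_cmult_right[OF qpoch_inf_has_sum[OF p]])
    thus "((\<lambda>k. q powi ((n + int k)^2) * (inverse (qpoch p p k) * q ^ k)) has_sum
        q powi (n^2) * qpoch_inf (- (p powi (n + 1))) p) UNIV"
      unfolding p_def by (simp only: square_shifted_term[OF q0])
  qed
  thus ?thesis unfolding p_def .
qed

lemma has_sum_powi_square_div_qpochZ:
  fixes q :: complex
  assumes q0: "q \<noteq> 0" and q: "norm q < 1"
  shows "((\<lambda>n::int. q powi (n^2) / qpochZ (- (q^2)) (q^2) n) has_sum
          qpoch_inf (q^2) (q^2) * qpoch_inf (- q) (q^2) ^ 3) UNIV"
proof -
  define p where "p = q^2"
  have p: "norm p < 1" unfolding p_def by (rule norm_power2_less_one[OF q])
  have p0: "p \<noteq> 0" using q0 by (simp add: p_def)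
  have mp: "norm (- p) < 1" using p by simp
  have "q powi (n^2) * qpoch_inf (- (p powi (n + 1))) p / qpoch_inf (- p) p
      = q powi (n^2) / qpochZ (- p) p n" for n
  proof -
    have "1 / qpochZ (- p) p n = qpoch_inf (- p * p powi n) p / qpoch_inf (- p) p"
      by (rule inverse_qpochZ[OF p p0 qpoch_inf_nonzero[OF p mp]])
    moreover have "- p * p powi n = - (p powi (n + 1))"
      using p0 by (simp add: power_int_add mult.commute)
    ultimately show ?thesis by (simp add: divide_inverse mult.assoc)
  qed
  moreover have "qpoch_inf p p * qpoch_inf (- q) p * qpoch_inf (- q) p
      * inverse (qpoch_inf q p) / qpoch_inf (- p) p = qpoch_inf p p * qpoch_inf (- q) p ^ 3"
  proof -
    have "(qpoch_inf q p * qpoch_inf (- p) p) * qpoch_inf (- q) p = 1"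
      using qpoch_inf_product_eq_one[OF q] unfolding p_def by (simp only: mult_ac)
    hence "inverse (qpoch_inf q p * qpoch_inf (- p) p) = qpoch_inf (- q) p"
      by (rule inverse_unique)
    hence "inverse (qpoch_inf q p) / qpoch_inf (- p) p = qpoch_inf (- q) p"
      by (simp add: divide_inverse mult.commute)
    hence "qpoch_inf p p * qpoch_inf (- q) p * qpoch_inf (- q) p
        * (inverse (qpoch_inf q p) / qpoch_inf (- p) p) = qpoch_inf p p * qpoch_inf (- q) p ^ 3"
      by (simp add: power3_eq_cube mult.assoc)
    thus ?thesis by (simp only: times_divide_eq_right)
  qed
  ultimately show ?thesis
    using has_sum_divide_const[OF square_diagonal_sums_has_sum[OF q0 q, folded p_def],
        of "qpoch_inf (- p) p"]
    unfolding p_def by simp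
qed
section \<open>Jacobi's identity for \<open>(q;q)\<^sub>\<infinity>\<^sup>3\<close>\<close>

definition centered_geometric_sum :: "nat \<Rightarrow> complex \<Rightarrow> complex" where
  "centered_geometric_sum m w = inverse w ^ m * (\<Sum>i<2 * m + 1. w ^ i)"

lemma centered_geometric_sum_1 [simp]: "centered_geometric_sum m 1 = of_nat (2 * m + 1)"
  by (simp add: centered_geometric_sum_def)

lemma centered_geometric_sum_eq:
  fixes w :: complex
  assumes w0: "w \<noteq> 0" and w1: "w \<noteq> 1"
  shows "centered_geometric_sum m w = (w ^ m - inverse w ^ Suc m) * (w / (w - 1))"
proof -
  have "inverse w ^ m * w ^ m = 1"
    using w0 by (simp flip: power_mult_distrib)
  moreover have "w ^ (2 * m + 1) = w ^ m * w ^ m * w" by (simp add: power_add mult_2)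
  hence "inverse w ^ m * w ^ (2 * m + 1) = (inverse w ^ m * w ^ m) * (w ^ m * w)"
    by (simp only: mult_ac)
  ultimately have high: "inverse w ^ m * w ^ (2 * m + 1) = w ^ m * w" by simp
  have low: "inverse w ^ m = inverse w ^ Suc m * w" using w0 by simp
  have "centered_geometric_sum m w = inverse w ^ m * (w ^ (2 * m + 1) - 1) / (w - 1)"
    unfolding centered_geometric_sum_def by (simp only: geometric_sum[OF w1] times_divide_eq_right)
  also have "\<dots> = (w ^ m * w - inverse w ^ Suc m * w) / (w - 1)"
    by (simp only: right_diff_distrib high mult_1_right) (simp only: low)
  finally show ?thesis by (simp add: left_diff_distrib)
qed

lemma norm_centered_geometric_sum_le:
  fixes w :: complex
  assumes "w \<in> cball 1 (1/2)"
  shows "norm (centered_geometric_sum m w) \<le> 2 * 8 ^ m"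
proof -
  have d: "norm (w - 1) \<le> 1/2" using assms by (simp add: dist_norm norm_minus_commute)
  have "norm w \<ge> 1/2" using norm_triangle_ineq2[of 1 "1 - w"] d by (simp add: norm_minus_commute)
  hence "inverse (norm w) \<le> inverse (1/2)" by (rule le_imp_inverse_le) simp
  hence inv: "norm (inverse w) \<le> 2" by (simp add: norm_inverse)
  have w2: "norm w \<le> 2" using norm_triangle_ineq[of "w - 1" 1] d by simp
  have "norm (\<Sum>i<2 * m + 1. w ^ i) \<le> (\<Sum>i<2 * m + 1. (2::real) ^ i)"
    by (rule order_trans[OF norm_sum sum_mono]) (simp add: norm_power power_mono w2)
  also have "\<dots> \<le> 2 ^ (2 * m + 1)"
    by (induction m) simp_all
  finally have "norm (centered_geometric_sum m w) \<le> 2 ^ m * 2 ^ (2 * m + 1)"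
    unfolding centered_geometric_sum_def norm_mult norm_power
    by (intro mult_mono power_mono inv) simp_all
  also have "(2::real) ^ m * 2 ^ (2 * m + 1) = 2 * 8 ^ m"
    by (simp add: power_add power_mult flip: power_mult_distrib)
  finally show ?thesis .
qed

lemma continuous_on_centered_geometric_sum:
  "continuous_on (cball 1 (1/2)) (centered_geometric_sum m)"
proof -
  have "\<forall>w\<in>cball (1::complex) (1/2). w \<noteq> 0" by auto
  thus ?thesis unfolding centered_geometric_sum_def[abs_def] by (intro continuous_intros) auto
qed

lemma jacobi_term_pair:
  fixes Q w :: complex
  assumes Q: "Q \<noteq> 0" and w: "w \<noteq> 0"
  shows "(- Q * w) powi int m * Q powi ((int m)^2)
           + (- Q * w) powi (- int m - 1) * Q powi ((- int m - 1)^2)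
       = (-1) ^ m * Q ^ (m * m + m) * (w ^ m - inverse w ^ Suc m)"
proof -
  have "(int m)^2 = int (m * m)" by (simp add: power2_eq_square)
  hence "(- Q * w) powi int m * Q powi ((int m)^2) = (- Q * w) ^ m * Q ^ (m * m)"
    by (simp only: power_int_of_nat)
  also have "- Q * w = (-1) * Q * w" by simp
  hence "(- Q * w) ^ m = (-1) ^ m * Q ^ m * w ^ m" by (simp only: power_mult_distrib)
  finally have nonneg: "(- Q * w) powi int m * Q powi ((int m)^2) = (-1) ^ m * Q ^ (m * m + m) * w ^ m"
    by (simp add: power_add mult_ac)
  have sq: "(- int m - 1)^2 = int (Suc m * Suc m)" by (simp add: power2_eq_square algebra_simps)
  have cancel: "inverse Q ^ Suc m * Q ^ Suc m = 1"
    using Q by (simp only: power_mult_distrib[symmetric]) simp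
  have "(- Q * w) powi (- int m - 1) * Q powi ((- int m - 1)^2)
      = inverse (- Q * w) ^ Suc m * Q ^ (Suc m * Suc m)"
    by (simp only: sq powi_minus_of_nat_minus_one power_int_of_nat)
  also have "inverse (- Q * w) = (-1) * inverse Q * inverse w" by (simp add: inverse_mult_distrib)
  also have "((-1) * inverse Q * inverse w) ^ Suc m = (-1) ^ Suc m * inverse Q ^ Suc m * inverse w ^ Suc m"
    by (simp only: power_mult_distrib)
  also have "Q ^ (Suc m * Suc m) = Q ^ Suc m * Q ^ (m * m + m)"
    by (simp add: power_add[symmetric] algebra_simps)
  finally have "(- Q * w) powi (- int m - 1) * Q powi ((- int m - 1)^2)
      = (-1) ^ Suc m * (inverse Q ^ Suc m * Q ^ Suc m) * inverse w ^ Suc m * Q ^ (m * m + m)"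
    by (simp only: mult_ac)
  hence neg: "(- Q * w) powi (- int m - 1) * Q powi ((- int m - 1)^2)
      = (-1) ^ m * Q ^ (m * m + m) * (- (inverse w ^ Suc m))"
    unfolding cancel by simp
  show ?thesis unfolding nonneg neg by (simp add: algebra_simps)
qed

text \<open>At \<open>z = -Qw\<close> the triple product, paired as \<open>n \<leftrightarrow> -1-n\<close> and divided by \<open>1 - 1/w\<close>,
  becomes a series in the centred sums \<open>w\<^sup>-\<^sup>m + \<dots> + w\<^sup>m\<close>, which at \<open>w = 1\<close> equal \<open>2m+1\<close>.\<close>

lemma jacobi_cube_series_sums:
  fixes Q w :: complex
  assumes Q0: "Q \<noteq> 0" and Q: "norm Q < 1" and w0: "w \<noteq> 0" and w1: "w \<noteq> 1"
  shows "(\<lambda>m. (-1) ^ m * Q ^ (m * m + m) * centered_geometric_sum m w) sums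
          (qpoch_inf (Q^2) (Q^2) * qpoch_inf (Q^2 * w) (Q^2) * qpoch_inf (Q^2 * inverse w) (Q^2))"
proof -
  have Qw: "- Q * w \<noteq> 0" using Q0 w0 by simp
  have "- (- Q * w) * Q = Q^2 * w" by (simp add: power2_eq_square mult_ac)
  moreover have "- Q / (- Q * w) = inverse w" using Q0 by (simp add: field_simps)
  ultimately have triple: "((\<lambda>n::int. (- Q * w) powi n * Q powi (n^2)) has_sum
      qpoch_inf (Q^2) (Q^2) * qpoch_inf (Q^2 * w) (Q^2) * qpoch_inf (inverse w) (Q^2)) UNIV"
    using jacobi_triple_product[OF Q0 Q Qw] by (simp only:)
  define x where "x = Q^2"
  have x: "norm x < 1" unfolding x_def by (rule norm_power2_less_one[OF Q])
  from sums_int_pairs[OF triple[folded x_def]]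
  have "(\<lambda>m. (-1) ^ m * Q ^ (m * m + m) * (w ^ m - inverse w ^ Suc m)) sums
      (qpoch_inf x x * qpoch_inf (x * w) x * qpoch_inf (inverse w) x)"
    by (simp only: jacobi_term_pair[OF Q0 w0])
  hence "(\<lambda>m. (-1) ^ m * Q ^ (m * m + m) * (w ^ m - inverse w ^ Suc m) * (w / (w - 1))) sums
      (qpoch_inf x x * qpoch_inf (x * w) x * qpoch_inf (inverse w) x * (w / (w - 1)))"
    by (rule sums_mult2)
  moreover have "qpoch_inf (inverse w) x * (w / (w - 1)) = qpoch_inf (x * inverse w) x"
  proof -
    have "(1 - inverse w) * (w / (w - 1)) = 1" using w0 w1 by (simp add: field_simps)
    moreover have "qpoch_inf (inverse w) x * (w / (w - 1))
        = (1 - inverse w) * (w / (w - 1)) * qpoch_inf (x * inverse w) x"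
      by (subst qpoch_inf_funeq[OF x]) (simp only: mult_ac)
    ultimately show ?thesis by simp
  qed
  ultimately have "(\<lambda>m. (-1) ^ m * Q ^ (m * m + m) * ((w ^ m - inverse w ^ Suc m) * (w / (w - 1))))
      sums (qpoch_inf x x * qpoch_inf (x * w) x * qpoch_inf (x * inverse w) x)"
    by (simp only: mult.assoc)
  thus ?thesis by (simp only: x_def centered_geometric_sum_eq[OF w0 w1])
qed

lemma isCont_jacobi_cube_series:
  fixes Q :: complex
  assumes Q: "norm Q < 1"
  shows "isCont (\<lambda>w. \<Sum>m. (-1) ^ m * Q ^ (m * m + m) * centered_geometric_sum m w) 1"
proof -
  define M where "M = (\<lambda>m::nat. 2 * (8 ^ m * norm Q ^ (m * m)))"
  have summable: "summable M" unfolding M_def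
    by (intro summable_mult summable_power_times_power_square) (use Q in auto)
  have bound: "norm ((-1) ^ m * Q ^ (m * m + m) * centered_geometric_sum m w) \<le> M m"
    if "w \<in> cball 1 (1/2)" for m w
  proof -
    have "norm ((-1) ^ m * Q ^ (m * m + m) :: complex) = norm Q ^ (m * m) * norm Q ^ m"
      by (simp add: norm_mult norm_power power_add)
    also have "\<dots> \<le> norm Q ^ (m * m)"
      using Q by (simp add: mult_left_le power_le_one)
    finally have "norm ((-1) ^ m * Q ^ (m * m + m) * centered_geometric_sum m w)
        \<le> norm Q ^ (m * m) * (2 * 8 ^ m)"
      unfolding norm_mult[of "(-1) ^ m * Q ^ (m * m + m)"]
      by (rule mult_mono[OF _ norm_centered_geometric_sum_le[OF that]]) simp_all
    thus ?thesis by (simp add: M_def mult_ac)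
  qed
  have ul: "uniform_limit (cball 1 (1/2))
      (\<lambda>n w. \<Sum>m<n. (-1) ^ m * Q ^ (m * m + m) * centered_geometric_sum m w)
      (\<lambda>w. \<Sum>m. (-1) ^ m * Q ^ (m * m + m) * centered_geometric_sum m w) sequentially"
    by (rule Weierstrass_m_test[OF bound summable])
  have "continuous_on (cball 1 (1/2))
      (\<lambda>w. \<Sum>m. (-1) ^ m * Q ^ (m * m + m) * centered_geometric_sum m w)"
  proof (rule uniform_limit_theorem[OF _ ul])
    show "\<forall>\<^sub>F n in sequentially. continuous_on (cball 1 (1/2))
        (\<lambda>w. \<Sum>m<n. (-1) ^ m * Q ^ (m * m + m) * centered_geometric_sum m w)"
      by (intro always_eventually allI continuous_intros continuous_on_centered_geometric_sum)
  qed simp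
  thus ?thesis by (rule continuous_on_interior) simp
qed

lemma csqrt_power_even:
  assumes "even n"
  shows "csqrt x ^ n = x ^ (n div 2)"
proof -
  from assms have "n = 2 * (n div 2)" by simp
  hence "csqrt x ^ n = (csqrt x ^ 2) ^ (n div 2)" by (metis power_mult)
  thus ?thesis by simp
qed

lemma summable_norm_jacobi_cube:
  fixes x :: complex
  assumes x: "norm x < 1"
  shows "summable (\<lambda>m. norm ((-1) ^ m * of_nat (2 * m + 1) * x ^ ((m * m + m) div 2)))"
proof (rule summable_comparison_test[OF _ summable_power_times_power_square[of "norm (csqrt x)" 3]])
  have Q: "norm (csqrt x) < 1" using x by (simp add: real_sqrt_lt_1_iff)
  have "norm ((-1) ^ m * of_nat (2 * m + 1) * x ^ ((m * m + m) div 2))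
      = real (2 * m + 1) * norm (csqrt x) ^ m * norm (csqrt x) ^ (m * m)" for m
  proof -
    have "x ^ ((m * m + m) div 2) = csqrt x ^ (m * m + m)" by (simp add: csqrt_power_even)
    thus ?thesis
      by (simp only: norm_mult norm_power norm_of_nat norm_minus_cancel norm_one power_one)
         (simp add: power_add mult_ac)
  qed
  also have "\<dots> m \<le> 3 ^ m * 1 * norm (csqrt x) ^ (m * m)" for m
  proof -
    have "real (2 * m + 1) \<le> 3 ^ m" by (induction m) auto
    thus ?thesis using Q by (intro mult_right_mono mult_mono power_le_one) auto
  qed
  finally show "\<exists>N. \<forall>m\<ge>N. norm (norm ((-1) ^ m * of_nat (2 * m + 1) * x ^ ((m * m + m) div 2)))
      \<le> 3 ^ m * norm (csqrt x) ^ (m * m)"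
    by simp
qed (use x in \<open>auto simp: real_sqrt_lt_1_iff\<close>)

theorem jacobi_cube_sums:
  fixes x :: complex
  assumes x0: "x \<noteq> 0" and x: "norm x < 1"
  shows "(\<lambda>m. (-1) ^ m * of_nat (2 * m + 1) * x ^ ((m * m + m) div 2)) sums (qpoch_inf x x ^ 3)"
proof -
  define Q where "Q = csqrt x"
  have Q0: "Q \<noteq> 0" and QQ: "Q^2 = x" and Q: "norm Q < 1"
    using x0 x by (auto simp: Q_def real_sqrt_lt_1_iff)
  define F where "F = (\<lambda>w. \<Sum>m. (-1) ^ m * Q ^ (m * m + m) * centered_geometric_sum m w)"
  define P where "P = (\<lambda>w. qpoch_inf x x * qpoch_inf (x * w) x * qpoch_inf (x * inverse w) x)"
  have near_one: "\<forall>\<^sub>F w in at 1. F w = P w"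
  proof -
    have "\<forall>\<^sub>F w in at (1::complex). w \<noteq> 1 \<and> dist w 1 < 1/2"
      unfolding eventually_at by (rule exI[of _ "1/2"]) auto
    thus ?thesis
    proof (rule eventually_mono)
      fix w :: complex assume "w \<noteq> 1 \<and> dist w 1 < 1/2"
      hence "w \<noteq> 1" and "w \<noteq> 0" by (auto simp: dist_norm)
      from jacobi_cube_series_sums[OF Q0 Q this(2,1)]
      show "F w = P w" unfolding F_def P_def QQ by (simp add: sums_iff)
    qed
  qed
  have "isCont F 1" unfolding F_def by (rule isCont_jacobi_cube_series[OF Q])
  hence "(P \<longlongrightarrow> F 1) (at 1)"
    unfolding isCont_def by (rule Lim_transform_eventually[OF _ near_one])
  moreover have "isCont P 1"
    unfolding P_def using x
    by (intro continuous_intros isCont_o2[OF _ isCont_qpoch_inf[OF x]]) auto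
  ultimately have "F 1 = P 1"
    unfolding isCont_def using tendsto_unique[OF at_neq_bot] by blast
  moreover have "Q ^ (m * m + m) = x ^ ((m * m + m) div 2)" for m
    unfolding Q_def by (rule csqrt_power_even) simp
  hence "F 1 = (\<Sum>m. (-1) ^ m * of_nat (2 * m + 1) * x ^ ((m * m + m) div 2))"
    by (simp add: F_def mult_ac)
  ultimately show ?thesis
    using summable_sums[OF summable_norm_cancel[OF summable_norm_jacobi_cube[OF x]]]
    by (simp add: P_def power3_eq_cube)
qed

lemma int_decode_parity: "int_decode n = (if even n then int (n div 2) else - int (n div 2) - 1)"
  by (simp add: int_decode_def sum_decode_def)

lemma jacobi_cube_term_int_decode:
  fixes x :: complex
  shows "of_int (4 * int_decode n + 1) * x powi (2 * (int_decode n)^2 + int_decode n)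
       = (-1) ^ n * of_nat (2 * n + 1) * x ^ ((n * n + n) div 2)"
proof (cases "even n")
  case True
  then obtain k where n: "n = 2 * k" by (auto elim!: evenE)
  have "2 * (int k)^2 + int k = int ((n * n + n) div 2)"
    unfolding n by (simp add: power2_eq_square algebra_simps)
  moreover have "4 * int k + 1 = int (2 * n + 1)" unfolding n by simp
  moreover have "int_decode n = int k" unfolding int_decode_parity n by simp
  ultimately show ?thesis using True
    by (simp only: power_int_of_nat of_int_of_nat_eq) (simp add: n)
next
  case False
  then obtain k where n: "n = 2 * k + 1" by (auto elim!: oddE)
  have "(n * n + n) div 2 = 2 * k * k + 3 * k + 1" unfolding n by (simp add: algebra_simps)
  hence "2 * (- int k - 1)^2 + (- int k - 1) = int ((n * n + n) div 2)"
    by (simp add: power2_eq_square algebra_simps)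
  moreover have "4 * (- int k - 1) + 1 = - int (2 * n + 1)" unfolding n by simp
  moreover have "int_decode n = - int k - 1" unfolding int_decode_parity n by simp
  ultimately show ?thesis using False
    by (simp only: power_int_of_nat of_int_minus of_int_of_nat_eq) (simp add: n algebra_simps)
qed

lemma jacobi_cube_has_sum_int:
  fixes x :: complex
  assumes x0: "x \<noteq> 0" and x: "norm x < 1"
  shows "((\<lambda>k::int. of_int (4 * k + 1) * x powi (2 * k^2 + k)) has_sum qpoch_inf x x ^ 3) UNIV"
proof -
  have "((\<lambda>n. (-1) ^ n * of_nat (2 * n + 1) * x ^ ((n * n + n) div 2)) has_sum qpoch_inf x x ^ 3) UNIV"
    by (rule norm_summable_imp_has_sum[OF summable_norm_jacobi_cube[OF x] jacobi_cube_sums[OF x0 x]])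
  thus ?thesis
    by (simp only: has_sum_reindex_bij_betw[OF bij_int_decode, symmetric]
        jacobi_cube_term_int_decode)
qed

section \<open>Bisection\<close>

lemma has_sum_reindex_vanishing:
  fixes f :: "'b \<Rightarrow> 'a::{comm_monoid_add,topological_space}" and h :: "'c \<Rightarrow> 'b"
  assumes f: "(f has_sum S) UNIV" and h: "inj h" and zero: "\<And>n. n \<notin> range h \<Longrightarrow> f n = 0"
  shows "((\<lambda>r. f (h r)) has_sum S) UNIV"
proof -
  have "(f has_sum S) (range h)"
    using f by (subst has_sum_cong_neutral[where T = UNIV]) (auto simp: zero)
  thus ?thesis using has_sum_reindex[OF h, of f S] by (simp add: o_def)
qed

lemma has_sum_bisection:
  fixes f g :: "int \<Rightarrow> complex"
  assumes f: "(f has_sum A) UNIV" and g: "(g has_sum B) UNIV"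
    and sign: "\<And>n. g n = (if even n then f n else - f n)"
  shows "((\<lambda>r. f (2 * r)) has_sum (A + B) / 2) UNIV"
    and "((\<lambda>r. f (2 * r + 1)) has_sum (A - B) / 2) UNIV"
proof -
  have "((\<lambda>n. (f n + g n) / 2) has_sum (A + B) / 2) UNIV"
    by (intro has_sum_divide_const has_sum_add f g)
  hence "((\<lambda>r. (f (2 * r) + g (2 * r)) / 2) has_sum (A + B) / 2) UNIV"
  proof (rule has_sum_reindex_vanishing[where h = "\<lambda>r. 2 * r" and f = "\<lambda>n. (f n + g n) / 2"])
    fix n assume "n \<notin> range (\<lambda>r::int. 2 * r)"
    hence "odd n" by (metis evenE rangeI)
    thus "(f n + g n) / 2 = 0" by (simp add: sign)
  qed (simp add: inj_on_def)
  thus "((\<lambda>r. f (2 * r)) has_sum (A + B) / 2) UNIV" by (simp add: sign)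
  have "((\<lambda>n. f n + - g n) has_sum A + - B) UNIV"
    by (intro has_sum_add f has_sum_uminusI g)
  hence "((\<lambda>n. (f n - g n) / 2) has_sum (A - B) / 2) UNIV"
    by (intro has_sum_divide_const) simp
  hence "((\<lambda>r. (f (2 * r + 1) - g (2 * r + 1)) / 2) has_sum (A - B) / 2) UNIV"
  proof (rule has_sum_reindex_vanishing[where h = "\<lambda>r. 2 * r + 1" and f = "\<lambda>n. (f n - g n) / 2"])
    fix n assume "n \<notin> range (\<lambda>r::int. 2 * r + 1)"
    hence "even n" by (metis oddE rangeI)
    thus "(f n - g n) / 2 = 0" by (simp add: sign)
  qed (simp add: inj_on_def)
  thus "((\<lambda>r. f (2 * r + 1)) has_sum (A - B) / 2) UNIV" by (simp add: sign)
qed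

lemma qpochZ_square_series_bisection:
  fixes q :: complex
  assumes q0: "q \<noteq> 0" and q: "norm q < 1"
  shows "((\<lambda>r::int. q powi (4 * r^2) / qpochZ (- (q^2)) (q^2) (2 * r)) has_sum
           (qpoch_inf (q^2) (q^2) / 2 * ((qpoch_inf q (q^2))^3 + (qpoch_inf (- q) (q^2))^3))) UNIV"
    and "((\<lambda>r::int. q powi (4 * r^2 + 4 * r) / qpochZ (- (q^2)) (q^2) (2 * r + 1)) has_sum
           (qpoch_inf (q^2) (q^2) / (2 * q) * ((qpoch_inf (- q) (q^2))^3 - (qpoch_inf q (q^2))^3))) UNIV"
proof -
  define f where "f = (\<lambda>n::int. q powi (n^2) / qpochZ (- (q^2)) (q^2) n)"
  define g where "g = (\<lambda>n::int. (- q) powi (n^2) / qpochZ (- (q^2)) (q^2) n)"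
  have hf: "(f has_sum qpoch_inf (q^2) (q^2) * qpoch_inf (- q) (q^2) ^ 3) UNIV"
    unfolding f_def by (rule has_sum_powi_square_div_qpochZ[OF q0 q])
  have hg: "(g has_sum qpoch_inf (q^2) (q^2) * qpoch_inf q (q^2) ^ 3) UNIV"
    using has_sum_powi_square_div_qpochZ[of "- q"] q0 q unfolding g_def by simp
  have "g n = (if even n then f n else - f n)" for n
    by (simp add: f_def g_def power_int_minus_left)
  note parts = has_sum_bisection[OF hf hg this]
  have "(\<lambda>r. f (2 * r)) = (\<lambda>r. q powi (4 * r^2) / qpochZ (- (q^2)) (q^2) (2 * r))"
    by (simp add: f_def power_mult_distrib)
  moreover have "(qpoch_inf (q^2) (q^2) * qpoch_inf (- q) (q^2) ^ 3
      + qpoch_inf (q^2) (q^2) * qpoch_inf q (q^2) ^ 3) / 2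
    = qpoch_inf (q^2) (q^2) / 2 * ((qpoch_inf q (q^2))^3 + (qpoch_inf (- q) (q^2))^3)"
    by (simp add: algebra_simps add_divide_distrib)
  ultimately show "((\<lambda>r::int. q powi (4 * r^2) / qpochZ (- (q^2)) (q^2) (2 * r)) has_sum
      (qpoch_inf (q^2) (q^2) / 2 * ((qpoch_inf q (q^2))^3 + (qpoch_inf (- q) (q^2))^3))) UNIV"
    using parts(1) by (simp only:)
  have "(\<lambda>r. f (2 * r + 1) / q)
      = (\<lambda>r. q powi (4 * r^2 + 4 * r) / qpochZ (- (q^2)) (q^2) (2 * r + 1))"
  proof
    fix r :: int
    have "(2 * r + 1)^2 = (4 * r^2 + 4 * r) + 1" by (simp add: power2_eq_square algebra_simps)
    thus "f (2 * r + 1) / q = q powi (4 * r^2 + 4 * r) / qpochZ (- (q^2)) (q^2) (2 * r + 1)"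
      using q0 by (simp add: f_def power_int_add)
  qed
  moreover have "(qpoch_inf (q^2) (q^2) * qpoch_inf (- q) (q^2) ^ 3
      - qpoch_inf (q^2) (q^2) * qpoch_inf q (q^2) ^ 3) / 2 / q
    = qpoch_inf (q^2) (q^2) / (2 * q) * ((qpoch_inf (- q) (q^2))^3 - (qpoch_inf q (q^2))^3)"
    by (simp add: algebra_simps diff_divide_distrib)
  ultimately show "((\<lambda>r::int. q powi (4 * r^2 + 4 * r) / qpochZ (- (q^2)) (q^2) (2 * r + 1)) has_sum
      (qpoch_inf (q^2) (q^2) / (2 * q) * ((qpoch_inf (- q) (q^2))^3 - (qpoch_inf q (q^2))^3))) UNIV"
    using has_sum_divide_const[OF parts(2), of q] by (simp only:)
qed

lemma jacobi_cube_has_sum_int_products: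
  fixes q :: complex
  assumes q0: "q \<noteq> 0" and q: "norm q < 1"
  shows "((\<lambda>k::int. of_int (4 * k + 1) * q powi (2 * k^2 + k)) has_sum
          (qpoch_inf q (q^2) * qpoch_inf (q^2) (q^2)) ^ 3) UNIV"
proof -
  have "qpoch_inf q q = qpoch_inf q (q^2) * qpoch_inf (q^2) (q^2)"
    using qpoch_inf_double[OF q, of q] by (simp add: power2_eq_square)
  thus ?thesis using jacobi_cube_has_sum_int[OF q0 q] by simp
qed

lemma jacobi_cube_reflected_odd_term:
  fixes q :: complex
  assumes q0: "q \<noteq> 0"
  shows "of_int (4 * (- 2 * r - 1) + 1) * q powi (2 * (- 2 * r - 1)^2 + (- 2 * r - 1)) / (- q)
       = of_int (8 * r + 3) * q powi (8 * r^2 + 6 * r)"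
proof -
  have exponent: "2 * (- 2 * r - 1)^2 + (- 2 * r - 1) = (8 * r^2 + 6 * r) + 1"
    by (simp add: power2_eq_square algebra_simps)
  have factor: "4 * (- 2 * r - 1) + 1 = - (8 * r + 3)" by simp
  have "q powi ((8 * r^2 + 6 * r) + 1) = q powi (8 * r^2 + 6 * r) * q"
    using q0 by (simp add: power_int_add)
  thus ?thesis unfolding exponent factor using q0
    by (simp del: of_int_add of_int_mult add: mult.assoc[symmetric]) (simp add: algebra_simps)
qed

lemma jacobi_cube_bisection:
  fixes q :: complex
  assumes q0: "q \<noteq> 0" and q: "norm q < 1"
  shows "((\<lambda>r::int. of_int (8 * r + 1) * q powi (8 * r^2 + 2 * r)) has_sum
           ((qpoch_inf (q^2) (q^2))^3 / 2 * ((qpoch_inf q (q^2))^3 + (qpoch_inf (- q) (q^2))^3))) UNIV"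
    and "((\<lambda>r::int. of_int (8 * r + 3) * q powi (8 * r^2 + 6 * r)) has_sum
           ((qpoch_inf (q^2) (q^2))^3 / (2 * q) * ((qpoch_inf (- q) (q^2))^3 - (qpoch_inf q (q^2))^3))) UNIV"
proof -
  define f where "f = (\<lambda>k::int. of_int (4 * k + 1) * q powi (2 * k^2 + k))"
  define g where "g = (\<lambda>k::int. of_int (4 * k + 1) * (- q) powi (2 * k^2 + k))"
  have hf: "(f has_sum (qpoch_inf q (q^2) * qpoch_inf (q^2) (q^2)) ^ 3) UNIV"
    unfolding f_def by (rule jacobi_cube_has_sum_int_products[OF q0 q])
  have hg: "(g has_sum (qpoch_inf (- q) (q^2) * qpoch_inf (q^2) (q^2)) ^ 3) UNIV"
    using jacobi_cube_has_sum_int_products[of "- q"] q0 q unfolding g_def by simp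
  have "g k = (if even k then f k else - f k)" for k
    by (simp add: f_def g_def power_int_minus_left)
  note parts = has_sum_bisection[OF hf hg this]
  have "(\<lambda>r. f (2 * r)) = (\<lambda>r. of_int (8 * r + 1) * q powi (8 * r^2 + 2 * r))"
    by (simp add: f_def power2_eq_square)
  moreover have "((qpoch_inf q (q^2) * qpoch_inf (q^2) (q^2)) ^ 3
      + (qpoch_inf (- q) (q^2) * qpoch_inf (q^2) (q^2)) ^ 3) / 2
    = (qpoch_inf (q^2) (q^2))^3 / 2 * ((qpoch_inf q (q^2))^3 + (qpoch_inf (- q) (q^2))^3)"
    by (simp add: power_mult_distrib algebra_simps add_divide_distrib)
  ultimately show "((\<lambda>r::int. of_int (8 * r + 1) * q powi (8 * r^2 + 2 * r)) has_sum
      ((qpoch_inf (q^2) (q^2))^3 / 2 * ((qpoch_inf q (q^2))^3 + (qpoch_inf (- q) (q^2))^3))) UNIV"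
    using parts(1) by (simp only:)
  text \<open>The odd part is read backwards, \<open>2r + 1 = -2s - 1\<close>, to make the exponents \<open>8s\<^sup>2 + 6s + 1\<close>.\<close>
  have "((\<lambda>r. f (2 * r + 1)) has_sum S) UNIV \<longleftrightarrow> ((\<lambda>r. f (- 2 * r - 1)) has_sum S) UNIV" for S
    by (rule has_sum_reindex_bij_witness[where i = "\<lambda>r. - r - 1" and j = "\<lambda>r. - r - 1"])
       (auto simp: algebra_simps)
  with parts(2) have "((\<lambda>r. f (- 2 * r - 1) / (- q)) has_sum
      ((qpoch_inf q (q^2) * qpoch_inf (q^2) (q^2)) ^ 3
        - (qpoch_inf (- q) (q^2) * qpoch_inf (q^2) (q^2)) ^ 3) / 2 / (- q)) UNIV"
    by (intro has_sum_divide_const) simp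
  moreover have "((qpoch_inf q (q^2) * qpoch_inf (q^2) (q^2)) ^ 3
        - (qpoch_inf (- q) (q^2) * qpoch_inf (q^2) (q^2)) ^ 3) / 2 / (- q)
    = (qpoch_inf (q^2) (q^2))^3 / (2 * q) * ((qpoch_inf (- q) (q^2))^3 - (qpoch_inf q (q^2))^3)"
    by (simp add: power_mult_distrib algebra_simps diff_divide_distrib)
  ultimately show "((\<lambda>r::int. of_int (8 * r + 3) * q powi (8 * r^2 + 6 * r)) has_sum
      ((qpoch_inf (q^2) (q^2))^3 / (2 * q) * ((qpoch_inf (- q) (q^2))^3 - (qpoch_inf q (q^2))^3))) UNIV"
    unfolding f_def jacobi_cube_reflected_odd_term[OF q0] by simp
qed

theorem mainTheorem15:
  fixes q :: complex
  assumes "norm q < 1" and "q \<noteq> 0"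
  shows "((\<lambda>r::int. q powi (4 * r^2) / qpochZ (- (q^2)) (q^2) (2 * r)) has_sum
           (qpoch_inf (q^2) (q^2) / 2 *
             ((qpoch_inf q (q^2))^3 + (qpoch_inf (- q) (q^2))^3))) UNIV \<and>
         ((\<lambda>r::int. q powi (4 * r^2 + 4 * r) / qpochZ (- (q^2)) (q^2) (2 * r + 1)) has_sum
           (qpoch_inf (q^2) (q^2) / (2 * q) *
             ((qpoch_inf (- q) (q^2))^3 - (qpoch_inf q (q^2))^3))) UNIV \<and>
         ((\<lambda>r::int. of_int (8 * r + 1) * q powi (8 * r^2 + 2 * r)) has_sum
           ((qpoch_inf (q^2) (q^2))^3 / 2 *
             ((qpoch_inf q (q^2))^3 + (qpoch_inf (- q) (q^2))^3))) UNIV \<and>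
         ((\<lambda>r::int. of_int (8 * r + 3) * q powi (8 * r^2 + 6 * r)) has_sum
           ((qpoch_inf (q^2) (q^2))^3 / (2 * q) *
             ((qpoch_inf (- q) (q^2))^3 - (qpoch_inf q (q^2))^3))) UNIV"
  using qpochZ_square_series_bisection[OF assms(2,1)] jacobi_cube_bisection[OF assms(2,1)]
  by blast

end
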